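(* For any connected locally finite cell complex $X$ with universal cover $\tilde X$, one has $\widetilde{\mathsf{TC}}(X)\ge\mathsf{TC}(\tilde X)$.
   Context: Normalized convention: $\mathsf{TC}$ of a contractible space is $0$; $\mathsf{TC}(Y)$ is the least $n$ such that $Y\times Y$ has an open cover by $n+1$ sets each admitting a continuous section of $Y^I\to Y\times Y$, $\alpha\mapsto(\alpha(0),\alpha(1))$. Let $P\colon\tilde X\to X$ be the universal cover with $\pi=\pi_1(X)$ acting by deck transformations, and $\tilde X\times_\pi\tilde X$ the quotient of $\tilde X\times\tilde X$ by the diagonal $\pi$-action. Let $p\colon X^I\to\tilde X\times_\pi\tilde X$, $p(\gamma)=[\tilde\gamma(0),\tilde\gamma(1)]$ for any lift $\tilde\gamma$ of $\gamma$, and $q\colon\tilde X\times_\pi\tilde X\to X\times X$, $q([x,y])=(Px,Py)$. $\widetilde{\mathsf{TC}}(X)$ is the least $k\ge0$ such that $X\times X$ has an open cover $U_0,\dots,U_k$ such that $p$ admits a continuous section over $q^{-1}(U_i)$ for each $i$. *)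

theory Defs
  imports "HOL-Analysis.Analysis" "HOL-Library.Extended_Nat"
begin

definition ndisc :: "nat \<Rightarrow> (nat \<Rightarrow> real) topology" where
  "ndisc n = subtopology (Euclidean_space n) {x. (\<Sum>i<n. x i ^ 2) \<le> 1}"

definition ndisc_interior :: "nat \<Rightarrow> (nat \<Rightarrow> real) set" where
  "ndisc_interior n = {x \<in> topspace (Euclidean_space n). (\<Sum>i<n. x i ^ 2) < 1}"

definition ndisc_boundary :: "nat \<Rightarrow> (nat \<Rightarrow> real) set" where
  "ndisc_boundary n = {x \<in> topspace (Euclidean_space n). (\<Sum>i<n. x i ^ 2) = 1}"

text \<open>A CW (cell) structure on X: a partition E of X into open cells, with dimension
  function cdim and characteristic maps Phi, satisfying closure finiteness and the
  weak topology condition.\<close>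
definition cw_structure ::
  "'a topology \<Rightarrow> 'a set set \<Rightarrow> ('a set \<Rightarrow> nat) \<Rightarrow> ('a set \<Rightarrow> (nat \<Rightarrow> real) \<Rightarrow> 'a) \<Rightarrow> bool" where
  "cw_structure X E cdim Phi \<longleftrightarrow>
     Hausdorff_space X \<and>
     pairwise disjnt E \<and> {} \<notin> E \<and> \<Union>E = topspace X \<and>
     (\<forall>e\<in>E. continuous_map (ndisc (cdim e)) X (Phi e) \<and>
        homeomorphic_map (subtopology (ndisc (cdim e)) (ndisc_interior (cdim e)))
                         (subtopology X e) (Phi e) \<and>
        (\<exists>F. finite F \<and> F \<subseteq> E \<and> (\<forall>e'\<in>F. cdim e' < cdim e) \<and>
             Phi e ` ndisc_boundary (cdim e) \<subseteq> \<Union>F)) \<and>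
     (\<forall>C \<subseteq> topspace X.
        (\<forall>e\<in>E. closedin (subtopology X (Phi e ` topspace (ndisc (cdim e))))
                          (C \<inter> Phi e ` topspace (ndisc (cdim e))))
        \<longrightarrow> closedin X C)"

definition locally_finite_cw_complex :: "'a topology \<Rightarrow> bool" where
  "locally_finite_cw_complex X \<longleftrightarrow>
     (\<exists>E cdim Phi. cw_structure X E cdim Phi \<and>
        (\<forall>x\<in>topspace X. \<exists>N. openin X N \<and> x \<in> N \<and> finite {e\<in>E. e \<inter> N \<noteq> {}}))"

definition covering_map :: "'b topology \<Rightarrow> 'a topology \<Rightarrow> ('b \<Rightarrow> 'a) \<Rightarrow> bool" where
  "covering_map Xt X P \<longleftrightarrow>
     continuous_map Xt X P \<and> P ` topspace Xt = topspace X \<and>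
     (\<forall>x\<in>topspace X. \<exists>T. x \<in> T \<and> openin X T \<and>
        (\<exists>V. \<Union>V = {y \<in> topspace Xt. P y \<in> T} \<and> (\<forall>u\<in>V. openin Xt u) \<and>
             pairwise disjnt V \<and>
             (\<forall>u\<in>V. homeomorphic_map (subtopology Xt u) (subtopology X T) P)))"

definition simply_connected_space :: "'a topology \<Rightarrow> bool" where
  "simply_connected_space Y \<longleftrightarrow>
     path_connected_space Y \<and>
     (\<forall>g. pathin Y g \<and> g 1 = g 0 \<longrightarrow>
        (\<exists>H. continuous_map (prod_topology (top_of_set {0..1::real}) (top_of_set {0..1::real})) Y H \<and>
             (\<forall>t\<in>{0..1}. H (0, t) = g t \<and> H (1, t) = g 0) \<and>
             (\<forall>s\<in>{0..1}. H (s, 0) = g 0 \<and> H (s, 1) = g 0)))"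

definition universal_cover :: "'b topology \<Rightarrow> 'a topology \<Rightarrow> ('b \<Rightarrow> 'a) \<Rightarrow> bool" where
  "universal_cover Xt X P \<longleftrightarrow> covering_map Xt X P \<and> simply_connected_space Xt"

text \<open>Deck transformations (for the universal cover this group is pi_1(X)).\<close>
definition deck :: "'b topology \<Rightarrow> ('b \<Rightarrow> 'a) \<Rightarrow> ('b \<Rightarrow> 'b) set" where
  "deck Xt P = {g. homeomorphic_map Xt Xt g \<and> (\<forall>x\<in>topspace Xt. P (g x) = P x)}"

definition quotient_topology :: "'a topology \<Rightarrow> ('a \<Rightarrow> 'c) \<Rightarrow> 'c topology" where
  "quotient_topology T f =
     topology (\<lambda>U. U \<subseteq> f ` topspace T \<and> openin T {x \<in> topspace T. f x \<in> U})"

definition dorbit :: "'b topology \<Rightarrow> ('b \<Rightarrow> 'a) \<Rightarrow> 'b \<times> 'b \<Rightarrow> ('b \<times> 'b) set" where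
  "dorbit Xt P z = {(g (fst z), g (snd z)) | g. g \<in> deck Xt P}"

definition orbit_space :: "'b topology \<Rightarrow> ('b \<Rightarrow> 'a) \<Rightarrow> ('b \<times> 'b) set topology" where
  "orbit_space Xt P = quotient_topology (prod_topology Xt Xt) (dorbit Xt P)"

definition qmap :: "('b \<Rightarrow> 'a) \<Rightarrow> ('b \<times> 'b) set \<Rightarrow> 'a \<times> 'a" where
  "qmap P z = (P (fst (SOME w. w \<in> z)), P (snd (SOME w. w \<in> z)))"

text \<open>A continuous section of the path fibration over U is encoded, via the exponential
  law for the compact-open topology on Y^I, as a continuous map U \<times> [0,1] \<rightarrow> Y.\<close>
definition TC :: "'a topology \<Rightarrow> enat" where
  "TC Y = Inf {enat n | n. \<exists>U :: nat \<Rightarrow> ('a \<times> 'a) set.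
     (\<forall>i\<le>n. openin (prod_topology Y Y) (U i)) \<and>
     (\<Union>i\<le>n. U i) = topspace (prod_topology Y Y) \<and>
     (\<forall>i\<le>n. \<exists>H. continuous_map
                   (prod_topology (subtopology (prod_topology Y Y) (U i)) (top_of_set {0..1::real})) Y H \<and>
                 (\<forall>a b. (a, b) \<in> U i \<longrightarrow> H ((a, b), 0) = a \<and> H ((a, b), 1) = b))}"

text \<open>Section s of p over q^{-1}(U), encoded as H(z,t) = s(z)(t); the condition p(s z) = z
  says some (equivalently every) lift of the path H(z,-) has endpoint pair in the class z.\<close>
definition TCtilde :: "'b topology \<Rightarrow> 'a topology \<Rightarrow> ('b \<Rightarrow> 'a) \<Rightarrow> enat" where
  "TCtilde Xt X P = Inf {enat k | k. \<exists>U :: nat \<Rightarrow> ('a \<times> 'a) set.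
     (\<forall>i\<le>k. openin (prod_topology X X) (U i)) \<and>
     (\<Union>i\<le>k. U i) = topspace (prod_topology X X) \<and>
     (\<forall>i\<le>k. \<exists>H. continuous_map
                   (prod_topology
                      (subtopology (orbit_space Xt P)
                         {z \<in> dorbit Xt P ` (topspace Xt \<times> topspace Xt). qmap P z \<in> U i})
                      (top_of_set {0..1::real})) X H \<and>
                 (\<forall>z \<in> dorbit Xt P ` (topspace Xt \<times> topspace Xt). qmap P z \<in> U i \<longrightarrow>
                    (\<exists>\<gamma>. pathin Xt \<gamma> \<and> (\<forall>t\<in>{0..1}. P (\<gamma> t) = H (z, t)) \<and>
                         (\<gamma> 0, \<gamma> 1) \<in> z)))}"

end

theory Submission
  imports Defs
begin

text \<open>
  Pull a cover \<open>U\<^sub>0, \<dots>, U\<^sub>k\<close> of \<open>X \<times> X\<close> witnessing \<open>TCtilde\<close> back along \<open>P \<times> P\<close>.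
  For \<open>(a, b)\<close> over \<open>U\<^sub>i\<close> the given section yields a path in \<open>X\<close> having a lift whose
  endpoints lie in the deck orbit of \<open>(a, b)\<close>; a deck transformation moves it to a lift from
  \<open>a\<close> to \<open>b\<close>. These lifts form a motion planner on the pulled-back set, because lifts of a
  continuous family of paths with continuously varying starting points are jointly continuous:
  near a point, the lifts that pass through one sheet at one time coincide with the sheet inverse
  on a whole box (uniqueness of lifts over a connected interval), and connectedness of \<open>[0,1]\<close>
  carries this from time \<open>0\<close> to every time.
\<close>

lemma openin_quotient_topology:
  "openin (quotient_topology T f) U \<longleftrightarrow> U \<subseteq> f ` topspace T \<and> openin T {x \<in> topspace T. f x \<in> U}"
proof -
  have "istopology (\<lambda>U. U \<subseteq> f ` topspace T \<and> openin T {x \<in> topspace T. f x \<in> U})"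
    unfolding istopology_def
  proof (rule conjI; intro allI impI)
    fix S S'
    assume "S \<subseteq> f ` topspace T \<and> openin T {x \<in> topspace T. f x \<in> S}"
      and "S' \<subseteq> f ` topspace T \<and> openin T {x \<in> topspace T. f x \<in> S'}"
    then have "openin T ({x \<in> topspace T. f x \<in> S} \<inter> {x \<in> topspace T. f x \<in> S'})"
      by (intro openin_Int) auto
    moreover have
      "{x \<in> topspace T. f x \<in> S} \<inter> {x \<in> topspace T. f x \<in> S'} = {x \<in> topspace T. f x \<in> S \<inter> S'}"
      by blast
    ultimately show "S \<inter> S' \<subseteq> f ` topspace T \<and> openin T {x \<in> topspace T. f x \<in> S \<inter> S'}"
      using \<open>S \<subseteq> f ` topspace T \<and> _\<close> by auto
  next
    fix K
    assume "\<forall>S\<in>K. S \<subseteq> f ` topspace T \<and> openin T {x \<in> topspace T. f x \<in> S}"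
    then have "openin T (\<Union>S\<in>K. {x \<in> topspace T. f x \<in> S})"
      by (intro openin_Union) auto
    moreover have "(\<Union>S\<in>K. {x \<in> topspace T. f x \<in> S}) = {x \<in> topspace T. f x \<in> \<Union>K}"
      by blast
    ultimately show "\<Union>K \<subseteq> f ` topspace T \<and> openin T {x \<in> topspace T. f x \<in> \<Union>K}"
      using \<open>\<forall>S\<in>K. _\<close> by auto
  qed
  then show ?thesis
    unfolding quotient_topology_def by simp
qed

lemma continuous_map_quotient_topology: "continuous_map T (quotient_topology T f) f"
proof -
  have "topspace (quotient_topology T f) = f ` topspace T"
  proof (rule antisym)
    show "topspace (quotient_topology T f) \<subseteq> f ` topspace T"
      by (metis openin_quotient_topology openin_topspace)
    have "{x \<in> topspace T. f x \<in> f ` topspace T} = topspace T"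
      by blast
    then show "f ` topspace T \<subseteq> topspace (quotient_topology T f)"
      by (intro openin_subset) (simp add: openin_quotient_topology)
  qed
  then show ?thesis
    by (auto simp: continuous_map_def openin_quotient_topology)
qed

lemma continuous_map_locally:
  assumes "\<And>x. x \<in> topspace X \<Longrightarrow> \<exists>N. openin X N \<and> x \<in> N \<and> continuous_map (subtopology X N) Y f"
  shows "continuous_map X Y f"
proof -
  from assms have ex: "\<forall>x\<in>topspace X. \<exists>N. openin X N \<and> x \<in> N \<and> continuous_map (subtopology X N) Y f"
    by blast
  obtain N where
    N: "\<And>x. x \<in> topspace X \<Longrightarrow> openin X (N x) \<and> x \<in> N x \<and> continuous_map (subtopology X (N x)) Y f"
    using bchoice[OF ex] by blast
  show ?thesis
  proof (rule pasting_lemma[where I = "topspace X" and T = N and f = "\<lambda>_. f"])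
    show "\<exists>j. j \<in> topspace X \<and> x \<in> N j \<and> f x = f x" if "x \<in> topspace X" for x
      using N that by blast
  qed (simp_all add: N)
qed

lemma connected_space_locally_constant_pred:
  assumes "connected_space C"
    and const: "\<And>x. x \<in> topspace C \<Longrightarrow> \<exists>N. openin C N \<and> x \<in> N \<and> (\<forall>y\<in>N. Q y \<longleftrightarrow> Q x)"
    and "a \<in> topspace C" "Q a" "b \<in> topspace C"
  shows "Q b"
proof -
  have open_level: "openin C {x \<in> topspace C. Q x \<longleftrightarrow> v}" for v
  proof (subst openin_subopen, intro ballI)
    fix x assume x: "x \<in> {x \<in> topspace C. Q x \<longleftrightarrow> v}"
    then obtain N where N: "openin C N" "x \<in> N" "\<forall>y\<in>N. Q y \<longleftrightarrow> Q x"
      using const by blast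
    then have "N \<subseteq> {x \<in> topspace C. Q x \<longleftrightarrow> v}"
      using x openin_subset by fastforce
    then show "\<exists>T. openin C T \<and> x \<in> T \<and> T \<subseteq> {x \<in> topspace C. Q x \<longleftrightarrow> v}"
      using N by blast
  qed
  have "topspace C - {x \<in> topspace C. Q x} = {x \<in> topspace C. Q x \<longleftrightarrow> False}"
    by blast
  then have "closedin C {x \<in> topspace C. Q x}"
    using open_level[of False] by (simp add: closedin_def)
  moreover have "openin C {x \<in> topspace C. Q x}"
    using open_level[of True] by simp
  ultimately show ?thesis
    using assms(1,3,4,5) unfolding connected_space_clopen_in by blast
qed

lemma continuous_map_fix_snd_on_Times:
  assumes "continuous_map (subtopology (prod_topology Z Y) (N \<times> J)) W g" "s \<in> J" "s \<in> topspace Y"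
  shows "continuous_map (subtopology Z N) W (\<lambda>z. g (z, s))"
proof -
  have "continuous_map (subtopology Z N) (subtopology (prod_topology Z Y) (N \<times> J)) (\<lambda>z. (z, s))"
  proof (rule continuous_map_into_subtopology)
    show "continuous_map (subtopology Z N) (prod_topology Z Y) (\<lambda>z. (z, s))"
      using assms(3) by (intro continuous_map_pairedI continuous_map_from_subtopology)
        (simp_all add: continuous_map_id[unfolded id_def])
    show "(\<lambda>z. (z, s)) \<in> topspace (subtopology Z N) \<rightarrow> N \<times> J"
      using assms(2) by auto
  qed
  then show ?thesis
    using continuous_map_compose[OF _ assms(1)] by (simp add: o_def)
qed

lemma continuous_map_fix_fst:
  assumes "continuous_map (prod_topology Z Y) W g" "z \<in> topspace Z"
  shows "continuous_map Y W (\<lambda>t. g (z, t))"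
proof -
  have "continuous_map Y (prod_topology Z Y) (\<lambda>t. (z, t))"
    using assms(2) by (intro continuous_map_pairedI) (simp_all add: continuous_map_id[unfolded id_def])
  then show ?thesis
    using continuous_map_compose[OF _ assms(1)] by (simp add: o_def)
qed

lemma covering_map_imp_continuous_map: "covering_map Xt X P \<Longrightarrow> continuous_map Xt X P"
  by (simp add: covering_map_def)

lemma covering_mapE:
  assumes "covering_map Xt X P" "x \<in> topspace X"
  obtains T V where "x \<in> T" "openin X T" "\<Union>V = {y \<in> topspace Xt. P y \<in> T}"
    "\<And>u. u \<in> V \<Longrightarrow> openin Xt u" "pairwise disjnt V"
    "\<And>u. u \<in> V \<Longrightarrow> homeomorphic_map (subtopology Xt u) (subtopology X T) P"
proof -
  have "\<forall>x\<in>topspace X. \<exists>T. x \<in> T \<and> openin X T \<and>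
          (\<exists>V. \<Union>V = {y \<in> topspace Xt. P y \<in> T} \<and> (\<forall>u\<in>V. openin Xt u) \<and> pairwise disjnt V \<and>
               (\<forall>u\<in>V. homeomorphic_map (subtopology Xt u) (subtopology X T) P))"
    using assms(1) unfolding covering_map_def by (elim conjE)
  then have "\<exists>T. x \<in> T \<and> openin X T \<and>
          (\<exists>V. \<Union>V = {y \<in> topspace Xt. P y \<in> T} \<and> (\<forall>u\<in>V. openin Xt u) \<and> pairwise disjnt V \<and>
               (\<forall>u\<in>V. homeomorphic_map (subtopology Xt u) (subtopology X T) P))"
    using assms(2) by (rule bspec)
  then obtain T V where TV: "x \<in> T" "openin X T" "\<Union>V = {y \<in> topspace Xt. P y \<in> T}"
    "\<forall>u\<in>V. openin Xt u" "pairwise disjnt V"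
    "\<forall>u\<in>V. homeomorphic_map (subtopology Xt u) (subtopology X T) P"
    by (elim exE conjE)
  show ?thesis
    by (rule that[OF TV(1-3) _ TV(5)]) (use TV(4,6) in blast)+
qed

lemma covering_map_lift_unique:
  assumes cov: "covering_map Xt X P" and C: "connected_space C"
    and f1: "continuous_map C Xt f1" and f2: "continuous_map C Xt f2"
    and same_image: "\<And>x. x \<in> topspace C \<Longrightarrow> P (f1 x) = P (f2 x)"
    and "a \<in> topspace C" "f1 a = f2 a" "b \<in> topspace C"
  shows "f1 b = f2 b"
proof (rule connected_space_locally_constant_pred[where Q = "\<lambda>w. f1 w = f2 w", OF C _ assms(6-8)])
  fix x assume x: "x \<in> topspace C"
  have f1x: "f1 x \<in> topspace Xt" and f2x: "f2 x \<in> topspace Xt"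
    using x continuous_map_image_subset_topspace[OF f1] continuous_map_image_subset_topspace[OF f2] by blast+
  then have "P (f1 x) \<in> topspace X"
    using continuous_map_image_subset_topspace[OF covering_map_imp_continuous_map[OF cov]] by blast
  then obtain T V where T: "P (f1 x) \<in> T" "openin X T" "\<Union>V = {y \<in> topspace Xt. P y \<in> T}"
    and V: "\<And>u. u \<in> V \<Longrightarrow> openin Xt u" "pairwise disjnt V"
      "\<And>u. u \<in> V \<Longrightarrow> homeomorphic_map (subtopology Xt u) (subtopology X T) P"
    by (rule covering_mapE[OF cov]) (rule that)
  have "f1 x \<in> \<Union>V" "f2 x \<in> \<Union>V"
    using T same_image[OF x] f1x f2x by auto
  then obtain u1 u2 where u: "u1 \<in> V" "f1 x \<in> u1" "u2 \<in> V" "f2 x \<in> u2"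
    by blast
  define N where "N = {w \<in> topspace C. f1 w \<in> u1} \<inter> {w \<in> topspace C. f2 w \<in> u2}"
  have "openin C N"
    unfolding N_def using u V(1) by (intro openin_Int openin_continuous_map_preimage[OF f1] openin_continuous_map_preimage[OF f2])
  moreover have "x \<in> N"
    unfolding N_def using x u by blast
  moreover have "f1 w = f2 w \<longleftrightarrow> f1 x = f2 x" if "w \<in> N" for w
  proof (cases "u1 = u2")
    case True
    have inj: "inj_on P (topspace Xt \<inter> u1)"
      using homeomorphic_imp_injective_map[OF V(3)[OF u(1)]] by simp
    have "f1 w \<in> topspace Xt \<inter> u1" "f2 w \<in> topspace Xt \<inter> u1" "w \<in> topspace C"
      using that True continuous_map_image_subset_topspace[OF f1] continuous_map_image_subset_topspace[OF f2]
      unfolding N_def by blast+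
    then have "f1 w = f2 w"
      using inj_onD[OF inj same_image] by blast
    moreover have "f1 x = f2 x"
      using inj_onD[OF inj same_image[OF x]] f1x f2x u True by blast
    ultimately show ?thesis
      by simp
  next
    case False
    then have "u1 \<inter> u2 = {}"
      using V(2) u by (meson disjnt_def pairwiseD)
    then show ?thesis
      using that u unfolding N_def by auto
  qed
  ultimately show "\<exists>N. openin C N \<and> x \<in> N \<and> (\<forall>w\<in>N. f1 w = f2 w \<longleftrightarrow> f1 x = f2 x)"
    by blast
qed

lemma covering_map_lift_eq_sheet_inverse:
  assumes cov: "covering_map Xt X P" and C: "connected_space C"
    and sheet: "homeomorphic_maps (subtopology Xt u) (subtopology X T) P \<phi>"
    and f: "continuous_map C Xt f" and g: "continuous_map C (subtopology X T) g"
    and lift: "\<And>x. x \<in> topspace C \<Longrightarrow> P (f x) = g x"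
    and a: "a \<in> topspace C" "f a \<in> u" and x: "x \<in> topspace C"
  shows "f x = \<phi> (g x)"
proof (rule covering_map_lift_unique[OF cov C f _ _ a(1) _ x])
  have \<phi>: "continuous_map (subtopology X T) (subtopology Xt u) \<phi>"
    and \<phi>_P: "\<And>y. y \<in> topspace (subtopology Xt u) \<Longrightarrow> \<phi> (P y) = y"
    and P_\<phi>: "\<And>z. z \<in> topspace (subtopology X T) \<Longrightarrow> P (\<phi> z) = z"
    using sheet by (auto simp: homeomorphic_maps_def)
  show "continuous_map C Xt (\<lambda>x. \<phi> (g x))"
    using continuous_map_compose[OF g \<phi>] continuous_map_into_fulltopology by (auto simp: o_def)
  have g_in: "g y \<in> topspace (subtopology X T)" if "y \<in> topspace C" for y
    using continuous_map_image_subset_topspace[OF g] that by blast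
  show "P (f y) = P (\<phi> (g y))" if "y \<in> topspace C" for y
    using lift[OF that] P_\<phi>[OF g_in[OF that]] by simp
  have "f a \<in> topspace (subtopology Xt u)"
    using continuous_map_image_subset_topspace[OF f] a by auto
  then show "f a = \<phi> (g a)"
    using \<phi>_P lift[OF a(1)] by metis
qed

lemma continuous_map_prod_interval_box:
  fixes Z :: "'z topology" and h :: "'z \<times> real \<Rightarrow> 'a"
  assumes h: "continuous_map (prod_topology Z (top_of_set {0..1})) X h" and T: "openin X T"
    and z0: "z0 \<in> topspace Z" and t0: "t0 \<in> {0..1}" and h0: "h (z0, t0) \<in> T"
  obtains N J where "openin Z N" "z0 \<in> N" "openin (top_of_set {0..1}) J" "t0 \<in> J" "connected J"
    "\<And>z t. z \<in> N \<Longrightarrow> t \<in> J \<Longrightarrow> h (z, t) \<in> T"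
proof -
  let ?I = "top_of_set {0..1::real}"
  have "openin (prod_topology Z ?I) {p \<in> topspace (prod_topology Z ?I). h p \<in> T}"
    using openin_continuous_map_preimage[OF h T] .
  moreover have "(z0, t0) \<in> {p \<in> topspace (prod_topology Z ?I). h p \<in> T}"
    using z0 t0 h0 by simp
  ultimately have "\<exists>N J0. openin Z N \<and> openin ?I J0 \<and> z0 \<in> N \<and> t0 \<in> J0 \<and>
      N \<times> J0 \<subseteq> {p \<in> topspace (prod_topology Z ?I). h p \<in> T}"
    unfolding openin_prod_topology_alt by blast
  then obtain N J0 where N: "openin Z N" "z0 \<in> N" and J0: "openin ?I J0" "t0 \<in> J0"
    and NJ0: "N \<times> J0 \<subseteq> {p \<in> topspace (prod_topology Z ?I). h p \<in> T}"
    by blast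
  have "\<exists>e>0. \<forall>t\<in>{0..1}. dist t t0 < e \<longrightarrow> t \<in> J0"
    using J0 unfolding openin_euclidean_subtopology_iff by blast
  then obtain e where "e > 0" and e: "\<And>t. t \<in> {0..1} \<Longrightarrow> dist t t0 < e \<Longrightarrow> t \<in> J0"
    by blast
  show ?thesis
  proof (rule that[OF N])
    show "openin ?I ({0..1} \<inter> ball t0 e)" "t0 \<in> {0..1} \<inter> ball t0 e"
      using t0 \<open>e > 0\<close> by (auto intro: openin_open_Int)
    show "connected ({0..1} \<inter> ball t0 e)"
      by (simp add: convex_Int convex_connected)
    show "h (z, t) \<in> T" if "z \<in> N" "t \<in> {0..1} \<inter> ball t0 e" for z t
      using NJ0 e[of t] that by (auto simp: dist_commute)
  qed
qed

lemma covering_map_path_lifts_continuous_on_box: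
  fixes Z :: "'z topology" and h :: "'z \<times> real \<Rightarrow> 'a" and K :: "'z \<Rightarrow> real \<Rightarrow> 'b"
  assumes cov: "covering_map Xt X P"
    and h: "continuous_map (prod_topology Z (top_of_set {0..1})) X h"
    and K_path: "\<forall>z\<in>topspace Z. pathin Xt (K z)"
    and K_lift: "\<forall>z\<in>topspace Z. \<forall>t\<in>{0..1}. P (K z t) = h (z, t)"
    and sheet: "homeomorphic_maps (subtopology Xt u) (subtopology X T) P \<phi>"
    and N: "N \<subseteq> topspace Z" and J: "connected J" "J \<subseteq> {0..1}"
    and hT: "\<And>z t. z \<in> N \<Longrightarrow> t \<in> J \<Longrightarrow> h (z, t) \<in> T"
    and s: "s \<in> J" "\<And>z. z \<in> N \<Longrightarrow> K z s \<in> u"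
  shows "continuous_map (subtopology (prod_topology Z (top_of_set {0..1})) (N \<times> J)) Xt (\<lambda>(z, t). K z t)"
proof -
  let ?I = "top_of_set {0..1::real}"
  have "connected_space (subtopology ?I J)"
    using J by (simp add: connected_space_subtopology connectedin_subtopology)
  note lift_eq = covering_map_lift_eq_sheet_inverse[OF cov this sheet]
  have K_eq: "K z t = \<phi> (h (z, t))" if z: "z \<in> N" and t: "t \<in> J" for z t
  proof (rule lift_eq)
    have zZ: "z \<in> topspace Z"
      using z N by auto
    show "continuous_map (subtopology ?I J) Xt (K z)"
      using bspec[OF K_path zZ] unfolding pathin_def by (rule continuous_map_from_subtopology)
    show "continuous_map (subtopology ?I J) (subtopology X T) (\<lambda>t. h (z, t))"
      using continuous_map_from_subtopology[OF continuous_map_fix_fst[OF h zZ]] hT z J(2)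
      by (auto intro: continuous_map_into_subtopology)
    show "P (K z t') = h (z, t')" if "t' \<in> topspace (subtopology ?I J)" for t'
      using bspec[OF K_lift zZ] that by auto
    show "s \<in> topspace (subtopology ?I J)" "t \<in> topspace (subtopology ?I J)"
      using s t J(2) by auto
    show "K z s \<in> u"
      using s z by simp
  qed
  have "continuous_map (subtopology (prod_topology Z ?I) (N \<times> J)) (subtopology X T) h"
    using hT by (auto intro!: continuous_map_into_subtopology continuous_map_from_subtopology[OF h])
  moreover have "continuous_map (subtopology X T) (subtopology Xt u) \<phi>"
    using sheet by (simp add: homeomorphic_maps_def)
  ultimately have "continuous_map (subtopology (prod_topology Z ?I) (N \<times> J)) Xt (\<phi> \<circ> h)"
    using continuous_map_compose continuous_map_into_fulltopology by blast
  then show ?thesis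
    by (rule continuous_map_eq) (auto simp: K_eq)
qed

lemma covering_map_path_lifts_locally_continuous:
  fixes Z :: "'z topology" and h :: "'z \<times> real \<Rightarrow> 'a" and K :: "'z \<Rightarrow> real \<Rightarrow> 'b"
  assumes cov: "covering_map Xt X P"
    and h: "continuous_map (prod_topology Z (top_of_set {0..1})) X h"
    and K_path: "\<forall>z\<in>topspace Z. pathin Xt (K z)"
    and K_lift: "\<forall>z\<in>topspace Z. \<forall>t\<in>{0..1}. P (K z t) = h (z, t)"
    and z0: "z0 \<in> topspace Z" and t0: "t0 \<in> {0..1}"
  obtains J where "openin (top_of_set {0..1}) J" "t0 \<in> J"
    "\<And>s N. \<lbrakk>s \<in> J; openin Z N; z0 \<in> N; continuous_map (subtopology Z N) Xt (\<lambda>z. K z s)\<rbrakk> \<Longrightarrow>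
       \<exists>N'. openin Z N' \<and> z0 \<in> N' \<and>
         continuous_map (subtopology (prod_topology Z (top_of_set {0..1})) (N' \<times> J)) Xt (\<lambda>(z, t). K z t)"
proof -
  have "h (z0, t0) \<in> topspace X"
    using continuous_map_image_subset_topspace[OF h] z0 t0 by auto
  then obtain T V where T: "h (z0, t0) \<in> T" "openin X T" and V: "\<Union>V = {y \<in> topspace Xt. P y \<in> T}"
    "\<And>u. u \<in> V \<Longrightarrow> openin Xt u" "pairwise disjnt V"
    "\<And>u. u \<in> V \<Longrightarrow> homeomorphic_map (subtopology Xt u) (subtopology X T) P"
    by (rule covering_mapE[OF cov]) (rule that)
  obtain N0 J where N0: "openin Z N0" "z0 \<in> N0" and J: "openin (top_of_set {0..1}) J" "t0 \<in> J" "connected J"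
    and hT: "\<And>z t. z \<in> N0 \<Longrightarrow> t \<in> J \<Longrightarrow> h (z, t) \<in> T"
    by (rule continuous_map_prod_interval_box[OF h T(2) z0 t0 T(1)]) (rule that)
  have J01: "J \<subseteq> {0..1}"
    using openin_subset[OF J(1)] by simp
  show ?thesis
  proof (rule that[OF J(1,2)])
    fix s N
    assume s: "s \<in> J" and N: "openin Z N" "z0 \<in> N"
      and Ks: "continuous_map (subtopology Z N) Xt (\<lambda>z. K z s)"
    have "K z0 s \<in> topspace Xt"
      using path_image_subset_topspace[OF bspec[OF K_path z0]] s J01 by auto
    then have "K z0 s \<in> \<Union>V"
      using V(1) bspec[OF K_lift z0] hT[OF N0(2) s] J01 s by auto
    then obtain u where u: "u \<in> V" "K z0 s \<in> u"
      by blast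
    obtain \<phi> where \<phi>: "homeomorphic_maps (subtopology Xt u) (subtopology X T) P \<phi>"
      using V(4)[OF u(1)] homeomorphic_map_maps by blast
    define N' where "N' = {z \<in> topspace (subtopology Z N). K z s \<in> u} \<inter> N0"
    have "openin Z N'"
      unfolding N'_def using openin_continuous_map_preimage[OF Ks V(2)[OF u(1)]] N(1) N0(1)
      by (intro openin_Int) (auto intro: openin_trans_full)
    moreover have "z0 \<in> N'"
      unfolding N'_def using z0 N(2) u(2) N0(2) by simp
    moreover have "continuous_map (subtopology (prod_topology Z (top_of_set {0..1})) (N' \<times> J)) Xt
        (\<lambda>(z, t). K z t)"
      using hT s unfolding N'_def
      by (intro covering_map_path_lifts_continuous_on_box[OF cov h K_path K_lift \<phi> _ J(3) J01]) auto
    ultimately show "\<exists>N'. openin Z N' \<and> z0 \<in> N' \<and>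
        continuous_map (subtopology (prod_topology Z (top_of_set {0..1})) (N' \<times> J)) Xt (\<lambda>(z, t). K z t)"
      by blast
  qed
qed

lemma covering_map_path_lifts_locally_continuous_slice:
  fixes Z :: "'z topology" and h :: "'z \<times> real \<Rightarrow> 'a" and K :: "'z \<Rightarrow> real \<Rightarrow> 'b"
  assumes cov: "covering_map Xt X P"
    and h: "continuous_map (prod_topology Z (top_of_set {0..1})) X h"
    and K_path: "\<forall>z\<in>topspace Z. pathin Xt (K z)"
    and K_lift: "\<forall>z\<in>topspace Z. \<forall>t\<in>{0..1}. P (K z t) = h (z, t)"
    and K_start: "continuous_map Z Xt (\<lambda>z. K z 0)"
    and z0: "z0 \<in> topspace Z" and t0: "t0 \<in> {0..1}"
  shows "\<exists>N. openin Z N \<and> z0 \<in> N \<and> continuous_map (subtopology Z N) Xt (\<lambda>z. K z t0)"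
proof (rule connected_induction_simple[OF connected_Icc _ t0])
  show "0 \<in> {0..1::real}"
    by simp
  show "\<exists>N. openin Z N \<and> z0 \<in> N \<and> continuous_map (subtopology Z N) Xt (\<lambda>z. K z 0)"
    using K_start z0 by (intro exI[of _ "topspace Z"]) auto
next
  let ?I = "top_of_set {0..1::real}"
  fix a :: real assume "a \<in> {0..1}"
  then obtain J where J: "openin ?I J" "a \<in> J"
    and J_lifts: "\<And>s N. \<lbrakk>s \<in> J; openin Z N; z0 \<in> N; continuous_map (subtopology Z N) Xt (\<lambda>z. K z s)\<rbrakk> \<Longrightarrow>
       \<exists>N'. openin Z N' \<and> z0 \<in> N' \<and>
         continuous_map (subtopology (prod_topology Z ?I) (N' \<times> J)) Xt (\<lambda>(z, t). K z t)"
    by (rule covering_map_path_lifts_locally_continuous[OF cov h K_path K_lift z0]) (rule that)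
  have "\<exists>N. openin Z N \<and> z0 \<in> N \<and> continuous_map (subtopology Z N) Xt (\<lambda>z. K z r)"
    if s: "s \<in> J" and r: "r \<in> J"
      and near_s: "\<exists>N. openin Z N \<and> z0 \<in> N \<and> continuous_map (subtopology Z N) Xt (\<lambda>z. K z s)"
    for s r
  proof -
    obtain N' where N': "openin Z N'" "z0 \<in> N'"
      and cont: "continuous_map (subtopology (prod_topology Z ?I) (N' \<times> J)) Xt (\<lambda>(z, t). K z t)"
      using J_lifts s near_s by blast
    have "r \<in> topspace ?I"
      using openin_subset[OF J(1)] r by auto
    then show ?thesis
      using N' continuous_map_fix_snd_on_Times[OF cont r] by auto
  qed
  then show "\<exists>J. openin ?I J \<and> a \<in> J \<and>
      (\<forall>s\<in>J. \<forall>r\<in>J. (\<exists>N. openin Z N \<and> z0 \<in> N \<and> continuous_map (subtopology Z N) Xt (\<lambda>z. K z s)) \<longrightarrow>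
                      (\<exists>N. openin Z N \<and> z0 \<in> N \<and> continuous_map (subtopology Z N) Xt (\<lambda>z. K z r)))"
    using J by blast
qed

lemma covering_map_path_lifts_continuous:
  fixes Z :: "'z topology" and h :: "'z \<times> real \<Rightarrow> 'a" and K :: "'z \<Rightarrow> real \<Rightarrow> 'b"
  assumes cov: "covering_map Xt X P"
    and h: "continuous_map (prod_topology Z (top_of_set {0..1})) X h"
    and K_path: "\<forall>z\<in>topspace Z. pathin Xt (K z)"
    and K_lift: "\<forall>z\<in>topspace Z. \<forall>t\<in>{0..1}. P (K z t) = h (z, t)"
    and K_start: "continuous_map Z Xt (\<lambda>z. K z 0)"
  shows "continuous_map (prod_topology Z (top_of_set {0..1})) Xt (\<lambda>(z, t). K z t)"
proof (rule continuous_map_locally)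
  let ?I = "top_of_set {0..1::real}"
  fix p assume "p \<in> topspace (prod_topology Z ?I)"
  then obtain z0 t0 where p: "p = (z0, t0)" and z0: "z0 \<in> topspace Z" and t0: "t0 \<in> {0..1}"
    by auto
  obtain J where J: "openin ?I J" "t0 \<in> J"
    and J_lifts: "\<And>s N. \<lbrakk>s \<in> J; openin Z N; z0 \<in> N; continuous_map (subtopology Z N) Xt (\<lambda>z. K z s)\<rbrakk> \<Longrightarrow>
       \<exists>N'. openin Z N' \<and> z0 \<in> N' \<and>
         continuous_map (subtopology (prod_topology Z ?I) (N' \<times> J)) Xt (\<lambda>(z, t). K z t)"
    by (rule covering_map_path_lifts_locally_continuous[OF cov h K_path K_lift z0 t0]) (rule that)
  then obtain N' where "openin Z N'" "z0 \<in> N'"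
    and "continuous_map (subtopology (prod_topology Z ?I) (N' \<times> J)) Xt (\<lambda>(z, t). K z t)"
    using covering_map_path_lifts_locally_continuous_slice[OF cov h K_path K_lift K_start z0 t0] by blast
  moreover have "openin (prod_topology Z ?I) (N' \<times> J)"
    using \<open>openin Z N'\<close> J(1) by (simp add: openin_prod_Times_iff)
  ultimately show "\<exists>N. openin (prod_topology Z ?I) N \<and> p \<in> N \<and>
      continuous_map (subtopology (prod_topology Z ?I) N) Xt (\<lambda>(z, t). K z t)"
    using p J(2) by blast
qed

definition motion_planner :: "'a topology \<Rightarrow> ('a \<times> 'a) set \<Rightarrow> (('a \<times> 'a) \<times> real \<Rightarrow> 'a) \<Rightarrow> bool" where
  "motion_planner Y U H \<longleftrightarrow>
     continuous_map (prod_topology (subtopology (prod_topology Y Y) U) (top_of_set {0..1})) Y H \<and>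
     (\<forall>a b. (a, b) \<in> U \<longrightarrow> H ((a, b), 0) = a \<and> H ((a, b), 1) = b)"

definition orbit_motion_planner ::
  "'b topology \<Rightarrow> 'a topology \<Rightarrow> ('b \<Rightarrow> 'a) \<Rightarrow> ('a \<times> 'a) set \<Rightarrow> (('b \<times> 'b) set \<times> real \<Rightarrow> 'a) \<Rightarrow> bool" where
  "orbit_motion_planner Xt X P U H \<longleftrightarrow>
     continuous_map
       (prod_topology
          (subtopology (orbit_space Xt P) {z \<in> dorbit Xt P ` (topspace Xt \<times> topspace Xt). qmap P z \<in> U})
          (top_of_set {0..1})) X H \<and>
     (\<forall>z \<in> dorbit Xt P ` (topspace Xt \<times> topspace Xt). qmap P z \<in> U \<longrightarrow>
        (\<exists>\<gamma>. pathin Xt \<gamma> \<and> (\<forall>t\<in>{0..1}. P (\<gamma> t) = H (z, t)) \<and> (\<gamma> 0, \<gamma> 1) \<in> z))"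

lemma TC_altdef:
  "TC Y = Inf {enat n | n. \<exists>U. (\<forall>i\<le>n. openin (prod_topology Y Y) (U i)) \<and>
     (\<Union>i\<le>n. U i) = topspace (prod_topology Y Y) \<and> (\<forall>i\<le>n. \<exists>H. motion_planner Y (U i) H)}"
  unfolding TC_def motion_planner_def ..

lemma TCtilde_altdef:
  "TCtilde Xt X P = Inf {enat k | k. \<exists>U. (\<forall>i\<le>k. openin (prod_topology X X) (U i)) \<and>
     (\<Union>i\<le>k. U i) = topspace (prod_topology X X) \<and> (\<forall>i\<le>k. \<exists>H. orbit_motion_planner Xt X P (U i) H)}"
  unfolding TCtilde_def orbit_motion_planner_def ..

lemma id_in_deck: "id \<in> deck Xt P"
  by (simp add: deck_def)

lemma qmap_dorbit:
  assumes "a \<in> topspace Xt" "b \<in> topspace Xt"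
  shows "qmap P (dorbit Xt P (a, b)) = (P a, P b)"
proof -
  have "(a, b) \<in> dorbit Xt P (a, b)"
    unfolding dorbit_def by (auto intro!: exI[of _ id] simp: id_in_deck)
  then have "(SOME w. w \<in> dorbit Xt P (a, b)) \<in> dorbit Xt P (a, b)"
    by (rule someI)
  then obtain g where "g \<in> deck Xt P" "(SOME w. w \<in> dorbit Xt P (a, b)) = (g a, g b)"
    unfolding dorbit_def by auto
  then show ?thesis
    using assms unfolding qmap_def deck_def by simp
qed

lemma deck_translate_path:
  assumes "a \<in> topspace Xt" "b \<in> topspace Xt" and \<gamma>: "pathin Xt \<gamma>"
    and ends: "(\<gamma> 0, \<gamma> 1) \<in> dorbit Xt P (a, b)"
  obtains \<gamma>' where "pathin Xt \<gamma>'" "\<And>t. t \<in> {0..1} \<Longrightarrow> P (\<gamma>' t) = P (\<gamma> t)" "\<gamma>' 0 = a" "\<gamma>' 1 = b"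
proof -
  obtain g where g: "g \<in> deck Xt P" "\<gamma> 0 = g a" "\<gamma> 1 = g b"
    using ends unfolding dorbit_def by auto
  then obtain g' where g': "homeomorphic_maps Xt Xt g g'" and gP: "\<And>x. x \<in> topspace Xt \<Longrightarrow> P (g x) = P x"
    unfolding deck_def homeomorphic_map_maps by blast
  have g'_cont: "continuous_map Xt Xt g'"
    and g'_g: "\<And>x. x \<in> topspace Xt \<Longrightarrow> g' (g x) = x"
    and g_g': "\<And>y. y \<in> topspace Xt \<Longrightarrow> g (g' y) = y"
    using g' unfolding homeomorphic_maps_def by auto
  show ?thesis
  proof (rule that)
    show "pathin Xt (g' \<circ> \<gamma>)"
      using \<gamma> g'_cont by (rule pathin_compose)
    show "P ((g' \<circ> \<gamma>) t) = P (\<gamma> t)" if "t \<in> {0..1}" for t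
    proof -
      have "\<gamma> t \<in> topspace Xt"
        using path_image_subset_topspace[OF \<gamma>] that by auto
      then show ?thesis
        using gP[of "g' (\<gamma> t)"] g_g' continuous_map_image_subset_topspace[OF g'_cont] by auto
    qed
    show "(g' \<circ> \<gamma>) 0 = a" "(g' \<circ> \<gamma>) 1 = b"
      using g g'_g assms(1,2) by auto
  qed
qed

lemma dorbit_in_qmap_preimage:
  assumes "a \<in> topspace Xt" "b \<in> topspace Xt" "(P a, P b) \<in> U"
  shows "dorbit Xt P (a, b) \<in> {z \<in> dorbit Xt P ` (topspace Xt \<times> topspace Xt). qmap P z \<in> U}"
  using assms qmap_dorbit[OF assms(1,2), of P] by auto

lemma orbit_motion_planner_pullback_continuous:
  assumes "orbit_motion_planner Xt X P U H"
  shows "continuous_map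
    (prod_topology (subtopology (prod_topology Xt Xt) {w \<in> topspace (prod_topology Xt Xt). (P (fst w), P (snd w)) \<in> U})
       (top_of_set {0..1})) X (\<lambda>(w, t). H (dorbit Xt P w, t))"
proof -
  let ?Z = "subtopology (prod_topology Xt Xt) {w \<in> topspace (prod_topology Xt Xt). (P (fst w), P (snd w)) \<in> U}"
  let ?Q = "subtopology (orbit_space Xt P) {z \<in> dorbit Xt P ` (topspace Xt \<times> topspace Xt). qmap P z \<in> U}"
  have "continuous_map ?Z (orbit_space Xt P) (dorbit Xt P)"
    unfolding orbit_space_def by (rule continuous_map_from_subtopology[OF continuous_map_quotient_topology])
  moreover have "dorbit Xt P \<in> topspace ?Z \<rightarrow> {z \<in> dorbit Xt P ` (topspace Xt \<times> topspace Xt). qmap P z \<in> U}"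
    using dorbit_in_qmap_preimage[of _ Xt _ P U] by fastforce
  ultimately have "continuous_map ?Z ?Q (dorbit Xt P)"
    by (rule continuous_map_into_subtopology)
  then have "continuous_map (prod_topology ?Z (top_of_set {0..1})) (prod_topology ?Q (top_of_set {0..1}))
      (\<lambda>(w, t). (dorbit Xt P w, id t))"
    by (simp add: continuous_map_prod_top)
  moreover have "continuous_map (prod_topology ?Q (top_of_set {0..1})) X H"
    using assms unfolding orbit_motion_planner_def by blast
  ultimately show ?thesis
    using continuous_map_compose by (fastforce simp: o_def case_prod_unfold)
qed

lemma orbit_motion_planner_lift:
  assumes planner: "orbit_motion_planner Xt X P U H"
    and a: "a \<in> topspace Xt" and b: "b \<in> topspace Xt" and "(P a, P b) \<in> U"
  obtains \<gamma> where "pathin Xt \<gamma>" "\<forall>t\<in>{0..1}. P (\<gamma> t) = H (dorbit Xt P (a, b), t)" "\<gamma> 0 = a" "\<gamma> 1 = b"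
proof -
  obtain \<gamma> where \<gamma>: "pathin Xt \<gamma>" "\<forall>t\<in>{0..1}. P (\<gamma> t) = H (dorbit Xt P (a, b), t)"
    and ends: "(\<gamma> 0, \<gamma> 1) \<in> dorbit Xt P (a, b)"
    using planner dorbit_in_qmap_preimage[OF assms(2-4)] unfolding orbit_motion_planner_def by blast
  obtain \<gamma>' where "pathin Xt \<gamma>'" "\<And>t. t \<in> {0..1} \<Longrightarrow> P (\<gamma>' t) = P (\<gamma> t)" "\<gamma>' 0 = a" "\<gamma>' 1 = b"
    by (rule deck_translate_path[OF a b \<gamma>(1) ends]) (rule that)
  with \<gamma>(2) show ?thesis
    using that by auto
qed

lemma motion_planner_from_orbit_motion_planner:
  assumes cov: "covering_map Xt X P" and planner: "orbit_motion_planner Xt X P U H"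
  shows "\<exists>H'. motion_planner Xt {w \<in> topspace (prod_topology Xt Xt). (P (fst w), P (snd w)) \<in> U} H'"
proof -
  let ?V = "{w \<in> topspace (prod_topology Xt Xt). (P (fst w), P (snd w)) \<in> U}"
  have "\<forall>w\<in>?V. \<exists>\<gamma>. pathin Xt \<gamma> \<and> (\<forall>t\<in>{0..1}. P (\<gamma> t) = H (dorbit Xt P w, t)) \<and>
      \<gamma> 0 = fst w \<and> \<gamma> 1 = snd w"
  proof
    fix w assume "w \<in> ?V"
    then obtain a b where "w = (a, b)" "a \<in> topspace Xt" "b \<in> topspace Xt" "(P a, P b) \<in> U"
      by auto
    then show "\<exists>\<gamma>. pathin Xt \<gamma> \<and> (\<forall>t\<in>{0..1}. P (\<gamma> t) = H (dorbit Xt P w, t)) \<and>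
        \<gamma> 0 = fst w \<and> \<gamma> 1 = snd w"
      using orbit_motion_planner_lift[OF planner] by (metis fst_conv snd_conv)
  qed
  then obtain K where K: "\<forall>w\<in>?V. pathin Xt (K w) \<and> (\<forall>t\<in>{0..1}. P (K w t) = H (dorbit Xt P w, t)) \<and>
      K w 0 = fst w \<and> K w 1 = snd w"
    by (rule bchoice[THEN exE])
  have "continuous_map (subtopology (prod_topology Xt Xt) ?V) Xt (\<lambda>w. K w 0)"
    using K by (intro continuous_map_eq[OF continuous_map_from_subtopology[OF continuous_map_fst]]) auto
  then have "continuous_map (prod_topology (subtopology (prod_topology Xt Xt) ?V) (top_of_set {0..1})) Xt
      (\<lambda>(w, t). K w t)"
    using K orbit_motion_planner_pullback_continuous[OF planner]
    by (intro covering_map_path_lifts_continuous[OF cov]) auto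
  then have "motion_planner Xt ?V (\<lambda>(w, t). K w t)"
    unfolding motion_planner_def using K by auto
  then show ?thesis
    by blast
qed

lemma TC_le_TCtilde:
  fixes Xt :: "'b topology" and X :: "'a topology" and P :: "'b \<Rightarrow> 'a"
  assumes cov: "covering_map Xt X P"
  shows "TC Xt \<le> TCtilde Xt X P"
  unfolding TC_altdef TCtilde_altdef
proof (rule Inf_superset_mono, safe)
  fix k :: nat and U :: "nat \<Rightarrow> ('a \<times> 'a) set"
  assume open_U: "\<forall>i\<le>k. openin (prod_topology X X) (U i)"
    and cover_U: "(\<Union>i\<le>k. U i) = topspace (prod_topology X X)"
    and planners: "\<forall>i\<le>k. \<exists>H. orbit_motion_planner Xt X P (U i) H"
  define V where "V i = {w \<in> topspace (prod_topology Xt Xt). (P (fst w), P (snd w)) \<in> U i}" for i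
  have "continuous_map (prod_topology Xt Xt) (prod_topology X X) (\<lambda>w. (P (fst w), P (snd w)))"
    using covering_map_imp_continuous_map[OF cov]
    by (intro continuous_map_pairedI continuous_map_compose[OF continuous_map_fst, unfolded o_def]
        continuous_map_compose[OF continuous_map_snd, unfolded o_def])
  then have "\<forall>i\<le>k. openin (prod_topology Xt Xt) (V i)"
    unfolding V_def using open_U openin_continuous_map_preimage by blast
  moreover have "(\<Union>i\<le>k. V i) = topspace (prod_topology Xt Xt)"
    using cover_U continuous_map_image_subset_topspace[OF covering_map_imp_continuous_map[OF cov]]
    unfolding V_def by fastforce
  moreover have "\<forall>i\<le>k. \<exists>H. motion_planner Xt (V i) H"
    using planners motion_planner_from_orbit_motion_planner[OF cov] unfolding V_def by blast
  ultimately show "\<exists>n. enat k = enat n \<and> (\<exists>U. (\<forall>i\<le>n. openin (prod_topology Xt Xt) (U i)) \<and>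
      (\<Union>i\<le>n. U i) = topspace (prod_topology Xt Xt) \<and> (\<forall>i\<le>n. \<exists>H. motion_planner Xt (U i) H))"
    by blast
qed

theorem mainTheorem13:
  fixes X :: "'a topology" and Xt :: "'b topology" and P :: "'b \<Rightarrow> 'a"
  assumes "locally_finite_cw_complex X"
    and "connected_space X"
    and "universal_cover Xt X P"
  shows "TCtilde Xt X P \<ge> TC Xt"
  using assms(3) TC_le_TCtilde unfolding universal_cover_def by blast

end
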